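(* Let $n \ge 1$ and $k > 1$ be integers. If the $n \times n$ Domineering board has outcome ${\rm 1st}$, then the $n \times kn$ board ($n$ rows, $kn$ columns) has outcome ${\rm 2nd}$ or $H$ when $k$ is even, and outcome ${\rm 1st}$ or $H$ when $k$ is odd. If the $n \times n$ board has outcome ${\rm 2nd}$, then the $n \times kn$ board has outcome ${\rm 2nd}$ or $H$ for every $k > 1$.
   Context: Domineering on an $a \times b$ board (a rectangle of $a$ rows and $b$ columns of unit cells): two players, Vera and Hepzibah, alternately place dominoes on empty cells; Vera places vertical dominoes (covering two vertically adjacent empty cells), Hepzibah places horizontal dominoes (covering two horizontally adjacent empty cells). A player who cannot move on her turn loses. The outcome class is $V$ if Vera wins with optimal play regardless of who moves first, $H$ if Hepzibah wins regardless of who moves first, ${\rm 1st}$ if the first player wins, and ${\rm 2nd}$ if the second player wins. *)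

theory Defs
  imports Main
begin

text \<open>Cells are pairs (row, column). The a x b board has rows 0..a-1 and columns 0..b-1.
  A position is the set of empty cells; the player named is the one to move.\<close>

datatype player = Vera | Hepzibah

fun other :: "player \<Rightarrow> player" where
  "other Vera = Hepzibah"
| "other Hepzibah = Vera"

definition board :: "nat \<Rightarrow> nat \<Rightarrow> (nat \<times> nat) set" where
  "board a b = {(i, j). i < a \<and> j < b}"

fun moves :: "player \<Rightarrow> (nat \<times> nat) set \<Rightarrow> (nat \<times> nat) set set" where
  "moves Vera S = {{(i, j), (Suc i, j)} | i j. (i, j) \<in> S \<and> (Suc i, j) \<in> S}"
| "moves Hepzibah S = {{(i, j), (i, Suc j)} | i j. (i, j) \<in> S \<and> (i, Suc j) \<in> S}"

text \<open>The least fixed point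
  is correct since play on a finite board terminates.\<close>
inductive win :: "player \<Rightarrow> (nat \<times> nat) set \<Rightarrow> bool"
  and lose :: "player \<Rightarrow> (nat \<times> nat) set \<Rightarrow> bool" where
  winI: "m \<in> moves p S \<Longrightarrow> lose (other p) (S - m) \<Longrightarrow> win p S"
| loseI: "(\<forall>m \<in> moves p S. win (other p) (S - m)) \<Longrightarrow> lose p S"

definition outcome_V :: "nat \<Rightarrow> nat \<Rightarrow> bool" where
  "outcome_V a b \<longleftrightarrow> win Vera (board a b) \<and> lose Hepzibah (board a b)"

definition outcome_H :: "nat \<Rightarrow> nat \<Rightarrow> bool" where
  "outcome_H a b \<longleftrightarrow> win Hepzibah (board a b) \<and> lose Vera (board a b)"

definition outcome_1st :: "nat \<Rightarrow> nat \<Rightarrow> bool" where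
  "outcome_1st a b \<longleftrightarrow> win Vera (board a b) \<and> win Hepzibah (board a b)"

definition outcome_2nd :: "nat \<Rightarrow> nat \<Rightarrow> bool" where
  "outcome_2nd a b \<longleftrightarrow> lose Vera (board a b) \<and> lose Hepzibah (board a b)"

end

theory Submission
  imports Defs
begin

text \<open>Forbid Hepzibah to place a domino across the boundary between two of the k column
  blocks of width n. This can only hurt her, and on a single n x n block it changes nothing.
  In the restricted game the n x kn board is a disjunctive sum of k copies of the square, and
  two copies side by side are a loss for Vera moving first: Hepzibah answers every vertical
  domino in one copy by its transpose, a horizontal domino, in the other copy, so that the two
  copies stay transposes of each other. Pairing off the blocks, Vera moving first loses when k
  is even. When k is odd the board is one square plus such pairs, so a first-move win for
  Hepzibah, or a first-move loss for Vera, on the square carries over to the whole board.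
  Determinacy of finite games turns these facts into the stated outcome classes.\<close>

lemma other_other [simp]: "other (other p) = p"
  by (cases p) auto

section \<open>Games given by a move function\<close>

inductive wins :: "(player \<Rightarrow> 'a set \<Rightarrow> 'a set set) \<Rightarrow> player \<Rightarrow> 'a set \<Rightarrow> bool"
  and loses :: "(player \<Rightarrow> 'a set \<Rightarrow> 'a set set) \<Rightarrow> player \<Rightarrow> 'a set \<Rightarrow> bool" for M where
  winsI: "m \<in> M p S \<Longrightarrow> loses M (other p) (S - m) \<Longrightarrow> wins M p S"
| losesI: "(\<forall>m \<in> M p S. wins M (other p) (S - m)) \<Longrightarrow> loses M p S"

lemma wins_iff: "wins M p S \<longleftrightarrow> (\<exists>m \<in> M p S. loses M (other p) (S - m))"
  by (auto elim: wins.cases intro: winsI)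

lemma loses_iff: "loses M p S \<longleftrightarrow> (\<forall>m \<in> M p S. wins M (other p) (S - m))"
  by (auto elim: loses.cases intro: losesI)

lemma wins_or_loses:
  assumes "finite S" and "\<And>p T m. m \<in> M p T \<Longrightarrow> m \<inter> T \<noteq> {}"
  shows "wins M p S \<or> loses M p S"
  using assms(1)
proof (induction S arbitrary: p rule: finite_psubset_induct)
  case (psubset S)
  have "wins M (other p) (S - m)" if "m \<in> M p S" "\<not> loses M (other p) (S - m)" for m
    using psubset.IH[of "S - m" "other p"] assms(2)[OF that(1)] that(2) by blast
  then show ?case
    by (meson winsI losesI)
qed

lemma
  assumes "\<And>S. M p S \<subseteq> M' p S" and "\<And>S. M' (other p) S \<subseteq> M (other p) S"
  shows wins_mono: "wins M p S \<Longrightarrow> wins M' p S"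
    and loses_mono: "loses M (other p) S \<Longrightarrow> loses M' (other p) S"
proof -
  have "wins M q S \<Longrightarrow> q = p \<Longrightarrow> wins M' q S"
    and "loses M q S \<Longrightarrow> q = other p \<Longrightarrow> loses M' q S" for q
  proof (induction rule: wins_loses.inducts)
    case (winsI m q S)
    then have "m \<in> M' q S" and "loses M' (other q) (S - m)"
      using assms(1) by auto
    then show ?case
      by (rule wins_loses.winsI)
  next
    case (losesI q S)
    then have "\<forall>m \<in> M' q S. wins M' (other q) (S - m)"
      using assms(2)[of S] by simp blast
    then show ?case
      by (rule wins_loses.losesI)
  qed
  then show "wins M p S \<Longrightarrow> wins M' p S" and "loses M (other p) S \<Longrightarrow> loses M' (other p) S"
    by auto
qed

lemma
  assumes "\<And>p T. T \<subseteq> S \<Longrightarrow> M p T = M' p T"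
  shows wins_cong: "wins M p S \<longleftrightarrow> wins M' p S"
    and loses_cong: "loses M p S \<longleftrightarrow> loses M' p S"
proof -
  have one_way:
    "wins M p S \<Longrightarrow> (\<forall>q T. T \<subseteq> S \<longrightarrow> M q T = M' q T) \<Longrightarrow> wins M' p S"
    "loses M p S \<Longrightarrow> (\<forall>q T. T \<subseteq> S \<longrightarrow> M q T = M' q T) \<Longrightarrow> loses M' p S"
    for M M' :: "player \<Rightarrow> 'a set \<Rightarrow> 'a set set" and p S
  proof (induction rule: wins_loses.inducts)
    case (winsI m p S)
    then have "m \<in> M' p S" and "loses M' (other p) (S - m)"
      by auto
    then show ?case
      by (rule wins_loses.winsI)
  next
    case (losesI p S)
    have "wins M' (other p) (S - m)" if "m \<in> M' p S" for m
    proof -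
      have "m \<in> M p S"
        using that losesI.prems by auto
      moreover have "\<forall>q T. T \<subseteq> S - m \<longrightarrow> M q T = M' q T"
        using losesI.prems by auto
      ultimately show ?thesis
        using losesI.IH by blast
    qed
    then show ?case
      by (intro wins_loses.losesI ballI)
  qed
  have agree: "\<forall>q T. T \<subseteq> S \<longrightarrow> M q T = M' q T"
    and agree': "\<forall>q T. T \<subseteq> S \<longrightarrow> M' q T = M q T"
    using assms by auto
  show "wins M p S \<longleftrightarrow> wins M' p S"
    using one_way(1)[OF _ agree] one_way(1)[OF _ agree'] by blast
  show "loses M p S \<longleftrightarrow> loses M' p S"
    using one_way(2)[OF _ agree] one_way(2)[OF _ agree'] by blast
qed

lemma win_eq_wins: "win p S \<longleftrightarrow> wins moves p S"
  and lose_eq_loses: "lose p S \<longleftrightarrow> loses moves p S"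
proof -
  have "win p S \<Longrightarrow> wins moves p S" and "lose p S \<Longrightarrow> loses moves p S"
    by (induction rule: win_lose.inducts) (auto intro: winsI losesI)
  moreover have "wins moves p S \<Longrightarrow> win p S" and "loses moves p S \<Longrightarrow> lose p S"
    by (induction rule: wins_loses.inducts) (auto intro: winI loseI)
  ultimately show "win p S \<longleftrightarrow> wins moves p S" and "lose p S \<longleftrightarrow> loses moves p S"
    by blast+
qed

lemma moves_subset: "m \<in> moves p S \<Longrightarrow> m \<noteq> {} \<and> m \<subseteq> S"
  by (cases p) auto

lemma moves_restrict: "m \<in> moves p S \<Longrightarrow> m \<subseteq> T \<Longrightarrow> m \<in> moves p T"
  by (cases p) auto

lemma finite_board: "finite (board a b)"
proof -
  have "board a b \<subseteq> {..<a} \<times> {..<b}"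
    by (auto simp: board_def)
  then show ?thesis
    by (rule finite_subset) simp
qed

lemma swap_board: "prod.swap ` board n n = board n n"
  by (auto simp: board_def)

fun partner :: "player \<Rightarrow> nat \<times> nat \<Rightarrow> nat \<times> nat" where
  "partner Vera (i, j) = (Suc i, j)"
| "partner Hepzibah (i, j) = (i, Suc j)"

lemma moves_partner: "moves p S = {{c, partner p c} | c. c \<in> S \<and> partner p c \<in> S}"
  by (cases p) force+

lemma moves_image:
  assumes "inj f" and partner_f: "\<And>c. partner q (f c) = f (partner p c)"
  shows "moves q (f ` X) = image f ` moves p X"
proof
  show "moves q (f ` X) \<subseteq> image f ` moves p X"
  proof
    fix m assume "m \<in> moves q (f ` X)"
    then obtain c where c: "c \<in> X" "f (partner p c) \<in> f ` X" and m: "m = f ` {c, partner p c}"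
      unfolding moves_partner by (auto simp: partner_f)
    then have "{c, partner p c} \<in> moves p X"
      using inj_image_mem_iff[OF assms(1)] unfolding moves_partner by blast
    with m show "m \<in> image f ` moves p X"
      by blast
  qed
  show "image f ` moves p X \<subseteq> moves q (f ` X)"
  proof
    fix m assume "m \<in> image f ` moves p X"
    then obtain c where "c \<in> X" "partner p c \<in> X" and m: "m = {f c, partner q (f c)}"
      unfolding moves_partner by (auto simp: partner_f)
    then have "f c \<in> f ` X" and "partner q (f c) \<in> f ` X"
      by (simp_all add: partner_f)
    with m show "m \<in> moves q (f ` X)"
      unfolding moves_partner by blast
  qed
qed

lemma moves_swap: "moves (other p) (prod.swap ` X) = image prod.swap ` moves p X"
proof (rule moves_image)
  show "partner (other p) (prod.swap c) = prod.swap (partner p c)" for c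
    by (cases p; cases c) auto
qed simp

lemma win_or_lose_board: "win p (board a b) \<or> lose p (board a b)"
proof -
  have "m \<inter> T \<noteq> {}" if "m \<in> moves q T" for m q T
    using moves_subset[OF that] by blast
  then show ?thesis
    using wins_or_loses[OF finite_board] by (simp add: win_eq_wins lose_eq_loses)
qed

section \<open>Domineering restricted to column blocks\<close>

definition blocks :: "nat \<Rightarrow> (nat \<times> nat) set \<Rightarrow> nat set" where
  "blocks n S = (\<lambda>(i, j). j div n) ` S"

lemma blocks_mono: "A \<subseteq> B \<Longrightarrow> blocks n A \<subseteq> blocks n B"
  by (auto simp: blocks_def)

lemma blocks_disjoint: "blocks n A \<inter> blocks n B = {} \<Longrightarrow> A \<inter> B = {}"
  by (auto simp: blocks_def)

definition block_moves :: "nat \<Rightarrow> player \<Rightarrow> (nat \<times> nat) set \<Rightarrow> (nat \<times> nat) set set" where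
  "block_moves n p S = {m \<in> moves p S. \<exists>b. \<forall>(i, j) \<in> m. j div n = b}"

lemma block_moves_Vera [simp]: "block_moves n Vera S = moves Vera S"
  by (auto simp: block_moves_def)

lemma block_moves_subset: "block_moves n p S \<subseteq> moves p S"
  by (auto simp: block_moves_def)

lemma block_moves_restrict: "m \<in> block_moves n p S \<Longrightarrow> m \<subseteq> T \<Longrightarrow> m \<in> block_moves n p T"
  by (auto simp: block_moves_def intro: moves_restrict)

lemma block_moves_mono: "A \<subseteq> B \<Longrightarrow> block_moves n p A \<subseteq> block_moves n p B"
proof
  fix m assume "A \<subseteq> B" and m: "m \<in> block_moves n p A"
  then have "m \<subseteq> B"
    using block_moves_subset moves_subset by blast
  with m show "m \<in> block_moves n p B"
    by (rule block_moves_restrict)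
qed

lemma block_moves_board: "T \<subseteq> board n n \<Longrightarrow> block_moves n p T = moves p T"
proof -
  assume T: "T \<subseteq> board n n"
  have "\<forall>(i, j) \<in> m. j div n = 0" if "m \<in> moves p T" for m
    using moves_subset[OF that] T by (auto simp: board_def)
  then show ?thesis
    unfolding block_moves_def by blast
qed

lemma block_moves_Un:
  assumes "blocks n A \<inter> blocks n B = {}"
  shows "block_moves n p (A \<union> B) = block_moves n p A \<union> block_moves n p B"
proof
  show "block_moves n p (A \<union> B) \<subseteq> block_moves n p A \<union> block_moves n p B"
  proof
    fix m assume m: "m \<in> block_moves n p (A \<union> B)"
    then obtain b where b: "\<forall>(i, j) \<in> m. j div n = b" and AB: "m \<subseteq> A \<union> B"
      by (auto simp: block_moves_def dest: moves_subset)
    have "m \<subseteq> A" if "b \<notin> blocks n B"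
      using b AB that by (force simp: blocks_def)
    moreover have "m \<subseteq> B" if "b \<notin> blocks n A"
      using b AB that by (force simp: blocks_def)
    ultimately have "m \<subseteq> A \<or> m \<subseteq> B"
      using assms by blast
    then show "m \<in> block_moves n p A \<union> block_moves n p B"
      using block_moves_restrict[OF m] by blast
  qed
  show "block_moves n p A \<union> block_moves n p B \<subseteq> block_moves n p (A \<union> B)"
    using block_moves_mono[of A "A \<union> B"] block_moves_mono[of B "A \<union> B"] by blast
qed

lemma block_move_Diff:
  assumes "m \<in> block_moves n p A" and "finite A" and "blocks n A \<inter> blocks n B = {}"
  shows "card (A - m) < card A" and "blocks n (A - m) \<inter> blocks n B = {}" and "A \<union> B - m = (A - m) \<union> B"
proof -
  have "m \<noteq> {}" and "m \<subseteq> A"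
    using assms(1) block_moves_subset moves_subset by blast+
  then show "card (A - m) < card A"
    using assms(2) by (auto intro: psubset_card_mono)
  show "blocks n (A - m) \<inter> blocks n B = {}"
    using assms(3) blocks_mono[of "A - m" A] by blast
  show "A \<union> B - m = (A - m) \<union> B"
    using \<open>m \<subseteq> A\<close> blocks_disjoint[OF assms(3)] by blast
qed

text \<open>Positions without a common column block form a disjunctive sum in the restricted game.
  From one player's point of view, these are the facts G \<le> 0, H \<le> 0 \<Longrightarrow> G + H \<le> 0 and
  G \<rhd> 0, H \<ge> 0 \<Longrightarrow> G + H \<rhd> 0 of combinatorial game theory.\<close>
lemma
  assumes "finite A" and "finite B" and "blocks n A \<inter> blocks n B = {}"
  shows loses_block_Un:
      "loses (block_moves n) p A \<Longrightarrow> loses (block_moves n) p B \<Longrightarrow> loses (block_moves n) p (A \<union> B)"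
    and wins_block_Un:
      "wins (block_moves n) p A \<Longrightarrow> loses (block_moves n) (other p) B \<Longrightarrow> wins (block_moves n) p (A \<union> B)"
proof -
  let ?M = "block_moves n"
  have "(loses ?M p A \<longrightarrow> loses ?M p B \<longrightarrow> loses ?M p (A \<union> B))
      \<and> (wins ?M p A \<longrightarrow> loses ?M (other p) B \<longrightarrow> wins ?M p (A \<union> B))"
    if "finite A" and "finite B" and "blocks n A \<inter> blocks n B = {}" for p A B
    using that
  proof (induction "card A + card B" arbitrary: p A B rule: less_induct)
    case less
    note sep = less.prems(3)
    have sep': "blocks n B \<inter> blocks n A = {}"
      using sep by blast
    show ?case
    proof (intro conjI impI)
      assume lose_A: "loses ?M p A" and lose_B: "loses ?M p B"
      have "wins ?M (other p) (A \<union> B - m)" if m: "m \<in> ?M p (A \<union> B)" for m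
      proof -
        have "m \<in> ?M p A \<or> m \<in> ?M p B"
          using m block_moves_Un[OF sep] by blast
        then show ?thesis
        proof
          assume mA: "m \<in> ?M p A"
          then have "wins ?M (other p) (A - m)"
            using lose_A loses_iff by blast
          then show ?thesis
            using less.hyps[of "A - m" B "other p"] block_move_Diff[OF mA less.prems(1) sep]
              less.prems lose_B by simp
        next
          assume mB: "m \<in> ?M p B"
          then have "wins ?M (other p) (B - m)"
            using lose_B loses_iff by blast
          moreover have "A \<union> B - m = (B - m) \<union> A"
            using block_move_Diff(3)[OF mB less.prems(2) sep'] by blast
          ultimately show ?thesis
            using less.hyps[of "B - m" A "other p"] block_move_Diff(1,2)[OF mB less.prems(2) sep']
              less.prems lose_A by simp
        qed
      qed
      then show "loses ?M p (A \<union> B)"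
        by (blast intro: losesI)
    next
      assume "wins ?M p A" and lose_B: "loses ?M (other p) B"
      then obtain m where m: "m \<in> ?M p A" and "loses ?M (other p) (A - m)"
        using wins_iff by blast
      then have "loses ?M (other p) (A \<union> B - m)"
        using less.hyps[of "A - m" B "other p"] block_move_Diff[OF m less.prems(1) sep]
          less.prems lose_B by simp
      moreover have "m \<in> ?M p (A \<union> B)"
        using m block_moves_Un[OF sep] by blast
      ultimately show "wins ?M p (A \<union> B)"
        by (blast intro: winsI)
    qed
  qed
  with assms show
      "loses ?M p A \<Longrightarrow> loses ?M p B \<Longrightarrow> loses ?M p (A \<union> B)"
      "wins ?M p A \<Longrightarrow> loses ?M (other p) B \<Longrightarrow> wins ?M p (A \<union> B)"
    by blast+
qed

section \<open>The transposition strategy\<close>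

definition to_block :: "nat \<Rightarrow> nat \<Rightarrow> nat \<times> nat \<Rightarrow> nat \<times> nat" where
  "to_block n a = (\<lambda>(i, j). (i, a * n + j))"

lemma inj_to_block: "inj (to_block n a)"
  by (auto simp: inj_def to_block_def)

lemma to_block_div: "X \<subseteq> board n n \<Longrightarrow> (i, j) \<in> to_block n a ` X \<Longrightarrow> j div n = a"
  by (auto simp: to_block_def board_def)

lemma blocks_to_block: "X \<subseteq> board n n \<Longrightarrow> blocks n (to_block n a ` X) \<subseteq> {a}"
  by (auto simp: blocks_def dest: to_block_div)

lemma block_moves_to_block:
  assumes "X \<subseteq> board n n"
  shows "block_moves n p (to_block n a ` X) = image (to_block n a) ` moves p X"
proof -
  have "\<exists>b. \<forall>(i, j) \<in> m. j div n = b" if "m \<in> moves p (to_block n a ` X)" for m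
    using moves_subset[OF that] to_block_div[OF assms] by (intro exI[of _ a]) fastforce
  then have "block_moves n p (to_block n a ` X) = moves p (to_block n a ` X)"
    unfolding block_moves_def by auto
  also have "\<dots> = image (to_block n a) ` moves p X"
  proof (rule moves_image[OF inj_to_block])
    show "partner p (to_block n a c) = to_block n a (partner p c)" for c
      by (cases p; cases c) (auto simp: to_block_def)
  qed
  finally show ?thesis .
qed

definition mirror_pair :: "nat \<Rightarrow> nat \<Rightarrow> nat \<Rightarrow> (nat \<times> nat) set \<Rightarrow> (nat \<times> nat) set" where
  "mirror_pair n a b X = to_block n a ` X \<union> to_block n b ` prod.swap ` X"

lemma mirror_pair_swap: "mirror_pair n a b X = mirror_pair n b a (prod.swap ` X)"
  by (auto simp: mirror_pair_def image_image)

lemma blocks_mirror_pair_disjoint: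
  assumes "X \<subseteq> board n n" and "a \<noteq> b"
  shows "blocks n (to_block n a ` X) \<inter> blocks n (to_block n b ` prod.swap ` X) = {}"
proof -
  have "prod.swap ` X \<subseteq> board n n"
    using assms(1) swap_board by blast
  then show ?thesis
    using blocks_to_block[OF assms(1), of a] blocks_to_block[of _ n b] assms(2) by blast
qed

lemma mirror_pair_Vera_moves:
  assumes "X \<subseteq> board n n" and "a \<noteq> b"
  shows "moves Vera (mirror_pair n a b X)
    = image (to_block n a) ` moves Vera X \<union> image (to_block n b) ` moves Vera (prod.swap ` X)"
proof -
  have Y: "prod.swap ` X \<subseteq> board n n"
    using assms(1) swap_board by blast
  have "moves Vera (mirror_pair n a b X) = block_moves n Vera (mirror_pair n a b X)"
    by simp
  also have "\<dots> = block_moves n Vera (to_block n a ` X) \<union> block_moves n Vera (to_block n b ` prod.swap ` X)"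
    unfolding mirror_pair_def by (rule block_moves_Un[OF blocks_mirror_pair_disjoint[OF assms]])
  also have "\<dots> = image (to_block n a) ` moves Vera X \<union> image (to_block n b) ` moves Vera (prod.swap ` X)"
    by (simp only: block_moves_to_block[OF assms(1)] block_moves_to_block[OF Y])
  finally show ?thesis .
qed

lemma mirror_reply:
  assumes X: "X \<subseteq> board n n" and "a \<noteq> b" and d: "d \<in> moves Vera X"
  shows "to_block n b ` prod.swap ` d \<in> block_moves n Hepzibah (mirror_pair n a b X - to_block n a ` d)"
    and "mirror_pair n a b X - to_block n a ` d - to_block n b ` prod.swap ` d = mirror_pair n a b (X - d)"
proof -
  have Y: "prod.swap ` X \<subseteq> board n n"
    using X swap_board by blast
  have disj: "to_block n a ` X \<inter> to_block n b ` prod.swap ` X = {}"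
    using blocks_disjoint[OF blocks_mirror_pair_disjoint[OF X \<open>a \<noteq> b\<close>]] .
  have "d \<subseteq> X"
    using moves_subset d by blast
  have "prod.swap ` d \<in> moves Hepzibah (prod.swap ` X)"
    using moves_swap[of Vera X] d by simp
  then have "to_block n b ` prod.swap ` d \<in> block_moves n Hepzibah (to_block n b ` prod.swap ` X)"
    using block_moves_to_block[OF Y] by blast
  moreover have "to_block n b ` prod.swap ` d \<subseteq> mirror_pair n a b X - to_block n a ` d"
    using \<open>d \<subseteq> X\<close> disj unfolding mirror_pair_def by blast
  ultimately show "to_block n b ` prod.swap ` d \<in> block_moves n Hepzibah (mirror_pair n a b X - to_block n a ` d)"
    by (rule block_moves_restrict)
  have "mirror_pair n a b X - to_block n a ` d - to_block n b ` prod.swap ` d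
      = (to_block n a ` X - to_block n a ` d) \<union> (to_block n b ` prod.swap ` X - to_block n b ` prod.swap ` d)"
    using \<open>d \<subseteq> X\<close> disj unfolding mirror_pair_def by blast
  also have "\<dots> = mirror_pair n a b (X - d)"
    unfolding mirror_pair_def by (simp add: image_set_diff inj_to_block)
  finally show "mirror_pair n a b X - to_block n a ` d - to_block n b ` prod.swap ` d = mirror_pair n a b (X - d)" .
qed

lemma loses_mirror_pair:
  assumes "X \<subseteq> board n n" and "a \<noteq> b"
  shows "loses (block_moves n) Vera (mirror_pair n a b X)"
  using assms
proof (induction "card X" arbitrary: X a b rule: less_induct)
  case less
  have answer: "wins (block_moves n) Hepzibah (mirror_pair n a' b' X' - to_block n a' ` d)"
    if X': "X' \<subseteq> board n n" "a' \<noteq> b'" "card X' = card X" and d: "d \<in> moves Vera X'" for a' b' X' d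
  proof -
    have "finite X'"
      using X'(1) finite_board finite_subset by blast
    moreover have "X' - d \<subset> X'"
      using moves_subset[OF d] by blast
    ultimately have "card (X' - d) < card X"
      using X'(3) psubset_card_mono by metis
    then have "loses (block_moves n) Vera (mirror_pair n a' b' (X' - d))"
      using less.hyps X'(1,2) by blast
    then show ?thesis
      using mirror_reply(2)[OF X'(1,2) d]
      by (intro winsI[where M = "block_moves n" and p = Hepzibah, OF mirror_reply(1)[OF X'(1,2) d]]) simp
  qed
  show ?case
  proof (rule losesI, rule ballI)
    fix m assume "m \<in> block_moves n Vera (mirror_pair n a b X)"
    then consider d where "d \<in> moves Vera X" "m = to_block n a ` d"
      | d where "d \<in> moves Vera (prod.swap ` X)" "m = to_block n b ` d"
      unfolding block_moves_Vera mirror_pair_Vera_moves[OF less.prems] by blast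
    then show "wins (block_moves n) (other Vera) (mirror_pair n a b X - m)"
    proof cases
      case 1
      then show ?thesis
        using answer[OF less.prems refl 1(1)] by simp
    next
      case 2
      have "prod.swap ` X \<subseteq> board n n"
        using less.prems(1) swap_board by blast
      moreover have "card (prod.swap ` X) = card X"
        by (simp add: card_image)
      ultimately show ?thesis
        using answer[OF _ less.prems(2)[symmetric] _ 2(1)] 2(2) mirror_pair_swap[of n a b X] by simp
    qed
  qed
qed

section \<open>Boards made of square blocks\<close>

definition block_strip :: "nat \<Rightarrow> nat \<Rightarrow> nat \<Rightarrow> (nat \<times> nat) set" where
  "block_strip n a b = (\<Union>c \<in> {a..<b}. to_block n c ` board n n)"

lemma finite_block_strip: "finite (block_strip n a b)"
  by (simp add: block_strip_def finite_board)

lemma block_strip_split: "a \<le> b \<Longrightarrow> b \<le> c \<Longrightarrow> block_strip n a c = block_strip n a b \<union> block_strip n b c"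
  unfolding block_strip_def by (metis ivl_disj_un_two(3) UN_Un)

lemma blocks_block_strip: "blocks n (block_strip n a b) \<subseteq> {a..<b}"
  by (auto simp: block_strip_def blocks_def to_block_def board_def)

lemma blocks_block_strip_disjoint:
  "b \<le> c \<Longrightarrow> blocks n (block_strip n a b) \<inter> blocks n (block_strip n c d) = {}"
  using blocks_block_strip[of n a b] blocks_block_strip[of n c d] by fastforce

lemma block_strip_pair: "block_strip n a (Suc (Suc a)) = mirror_pair n a (Suc a) (board n n)"
  by (auto simp: block_strip_def mirror_pair_def swap_board atLeastLessThanSuc)

lemma board_eq_block_strip:
  assumes "0 < n"
  shows "board n (k * n) = block_strip n 0 k"
proof
  show "board n (k * n) \<subseteq> block_strip n 0 k"
  proof
    fix c assume "c \<in> board n (k * n)"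
    then obtain i j where c: "c = (i, j)" and "i < n" and "j < k * n"
      by (auto simp: board_def)
    then have "(i, j mod n) \<in> board n n" and "j div n \<in> {0..<k}"
      using assms by (auto simp: board_def less_mult_imp_div_less)
    moreover have "c = to_block n (j div n) (i, j mod n)"
      using c by (simp add: to_block_def)
    ultimately show "c \<in> block_strip n 0 k"
      unfolding block_strip_def by blast
  qed
  show "block_strip n 0 k \<subseteq> board n (k * n)"
  proof
    fix c assume "c \<in> block_strip n 0 k"
    then obtain a i j where "a < k" "i < n" "j < n" and c: "c = (i, a * n + j)"
      by (auto simp: block_strip_def board_def to_block_def)
    have "a * n + j < Suc a * n"
      using \<open>j < n\<close> by simp
    also have "\<dots> \<le> k * n"
      using \<open>a < k\<close> by (intro mult_le_mono1) simp
    finally show "c \<in> board n (k * n)"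
      using c \<open>i < n\<close> by (simp add: board_def)
  qed
qed

lemma loses_block_strip_even: "loses (block_moves n) Vera (block_strip n a (a + 2 * m))"
proof (induction m)
  case 0
  show ?case
    by (simp add: block_strip_def losesI)
next
  case (Suc m)
  let ?b = "a + 2 * m"
  have "block_strip n a (a + 2 * Suc m) = block_strip n a ?b \<union> block_strip n ?b (Suc (Suc ?b))"
    using block_strip_split[of a ?b "Suc (Suc ?b)" n] by simp
  moreover have "loses (block_moves n) Vera (block_strip n ?b (Suc (Suc ?b)))"
    unfolding block_strip_pair by (simp add: loses_mirror_pair)
  ultimately show ?case
    using loses_block_Un[OF finite_block_strip finite_block_strip blocks_block_strip_disjoint] Suc.IH
    by simp
qed

lemma
  shows win_of_block_game: "wins (block_moves n) Hepzibah S \<Longrightarrow> win Hepzibah S"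
    and lose_of_block_game: "loses (block_moves n) Vera S \<Longrightarrow> lose Vera S"
proof -
  have fewer: "\<And>T. block_moves n Hepzibah T \<subseteq> moves Hepzibah T"
    by (rule block_moves_subset)
  have same: "\<And>T. moves (other Hepzibah) T \<subseteq> block_moves n (other Hepzibah) T"
    by (simp only: other.simps block_moves_Vera order_refl)
  show "wins (block_moves n) Hepzibah S \<Longrightarrow> win Hepzibah S"
    using wins_mono[where M = "block_moves n" and M' = moves, OF fewer same] by (simp only: win_eq_wins)
  show "loses (block_moves n) Vera S \<Longrightarrow> lose Vera S"
    using loses_mono[where M = "block_moves n" and M' = moves, OF fewer same] by (simp only: lose_eq_loses other.simps)
qed

lemma
  shows win_board_iff_block_game: "win p (board n n) \<longleftrightarrow> wins (block_moves n) p (board n n)"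
    and lose_board_iff_block_game: "lose p (board n n) \<longleftrightarrow> loses (block_moves n) p (board n n)"
  using wins_cong[OF block_moves_board[symmetric]] loses_cong[OF block_moves_board[symmetric]]
  by (simp_all add: win_eq_wins lose_eq_loses)

lemma lose_Vera_board_even:
  assumes "0 < n" and "even k"
  shows "lose Vera (board n (k * n))"
proof -
  have "loses (block_moves n) Vera (block_strip n 0 (0 + 2 * (k div 2)))"
    by (rule loses_block_strip_even)
  then show ?thesis
    using assms by (simp add: board_eq_block_strip lose_of_block_game)
qed

lemma board_odd_decomposition:
  assumes "0 < n" and "odd k"
  shows "board n (k * n) = board n n \<union> block_strip n 1 k"
    and "blocks n (board n n) \<inter> blocks n (block_strip n 1 k) = {}"
    and "loses (block_moves n) Vera (block_strip n 1 k)"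
proof -
  have square: "board n n = block_strip n 0 1"
    using board_eq_block_strip[OF assms(1), of 1] by simp
  show "board n (k * n) = board n n \<union> block_strip n 1 k"
    unfolding square board_eq_block_strip[OF assms(1)] using assms(2)
    by (intro block_strip_split) (auto elim: oddE)
  show "blocks n (board n n) \<inter> blocks n (block_strip n 1 k) = {}"
    unfolding square by (rule blocks_block_strip_disjoint) simp
  have "k = 1 + 2 * (k div 2)"
    using assms(2) by presburger
  then show "loses (block_moves n) Vera (block_strip n 1 k)"
    using loses_block_strip_even[of n 1 "k div 2"] by simp
qed

lemma win_Hepzibah_board_odd:
  assumes "0 < n" and "odd k" and "win Hepzibah (board n n)"
  shows "win Hepzibah (board n (k * n))"
proof -
  have "wins (block_moves n) Hepzibah (board n n \<union> block_strip n 1 k)"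
    using assms(3) board_odd_decomposition[OF assms(1,2)]
    by (intro wins_block_Un) (simp_all add: finite_board finite_block_strip win_board_iff_block_game)
  then show ?thesis
    using board_odd_decomposition(1)[OF assms(1,2)] by (simp add: win_of_block_game)
qed

lemma lose_Vera_board_odd:
  assumes "0 < n" and "odd k" and "lose Vera (board n n)"
  shows "lose Vera (board n (k * n))"
proof -
  have "loses (block_moves n) Vera (board n n \<union> block_strip n 1 k)"
    using assms(3) board_odd_decomposition[OF assms(1,2)]
    by (intro loses_block_Un) (simp_all add: finite_board finite_block_strip lose_board_iff_block_game)
  then show ?thesis
    using board_odd_decomposition(1)[OF assms(1,2)] by (simp add: lose_of_block_game)
qed

theorem mainTheorem11:
  fixes n k :: nat
  assumes "n \<ge> 1" and "k > 1"
  shows "(outcome_1st n n \<longrightarrow>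
            (even k \<longrightarrow> outcome_2nd n (k * n) \<or> outcome_H n (k * n)) \<and>
            (odd k \<longrightarrow> outcome_1st n (k * n) \<or> outcome_H n (k * n)))
       \<and> (outcome_2nd n n \<longrightarrow> outcome_2nd n (k * n) \<or> outcome_H n (k * n))"
proof -
  have n: "0 < n"
    using assms(1) by simp
  have V_loses: "outcome_2nd n (k * n) \<or> outcome_H n (k * n)" if "lose Vera (board n (k * n))"
    using that win_or_lose_board[of Hepzibah] unfolding outcome_2nd_def outcome_H_def by blast
  have H_wins: "outcome_1st n (k * n) \<or> outcome_H n (k * n)" if "win Hepzibah (board n (k * n))"
    using that win_or_lose_board[of Vera] unfolding outcome_1st_def outcome_H_def by blast
  show ?thesis
    using V_loses[OF lose_Vera_board_even[OF n]] V_loses[OF lose_Vera_board_odd[OF n]]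
      H_wins[OF win_Hepzibah_board_odd[OF n]]
    unfolding outcome_1st_def outcome_2nd_def by blast
qed

end
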